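(* Let $\boldsymbol{X}$ be an $\boldsymbol{\mathcal{L}}_\Lambda$ modal space, where $\mathcal{L}$ is based on a finite atom set $\Phi$ and modal equivalence and bisimilarity coincide on $X$. Then $\mathcal{D}_{\boldsymbol{X}}$ contains a metric $d_w$ inducing the same topology on $\boldsymbol{X}$ as the $n$-bisimulation metric $d_B$.
   Context: Given a set $\Phi$ of atoms and a finite set $I$ of agents, $\mathcal{L}$ is the modal language $\varphi::=\top\mid p\mid\neg\varphi\mid\varphi\wedge\varphi\mid\square_i\varphi$. A logic $\Lambda$ is a normal modal logic over $\mathcal{L}$ extending $K$; $\boldsymbol{\varphi}$ is the class of formulas $\Lambda$-equivalent to $\varphi$ and $\boldsymbol{\mathcal{L}}_\Lambda$ the set of such classes. Kripke models have countable nonempty state sets, relations $R_i$ ($i\in I$) and a valuation; pointed models are evaluated with standard semantics. For a set $X$ of pointed Kripke models, the $\boldsymbol{\mathcal{L}}_\Lambda$ modal space is $\boldsymbol{X}=\{\boldsymbol{x}:x\in X\}$ with $\boldsymbol{x}=\{y\in X:y\vDash\varphi\text{ iff }x\vDash\varphi\text{ for all }\varphi\}$. The $n$-bisimulation metric is $d_B(\boldsymbol{x},\boldsymbol{y})=0$ if $x,y$ are $n$-bisimilar for all $n\in\mathbb{N}_0$, and $2^{-n}$ for the least $n$ such that $x,y$ are not $n$-bisimilar. Metric family: let $D\subseteq\boldsymbol{\mathcal{L}}_\Lambda$ be such that for every $\boldsymbol{\psi}$ there is a finite $D_\psi\subseteq D$ such that any $x,y\in X$ satisfying exactly the same elements of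 $D_\psi$ agree on $\psi$; enumerate $D$ as $\boldsymbol{\varphi}_1,\boldsymbol{\varphi}_2,\dots$; let $d_k(\boldsymbol{x},\boldsymbol{y})=0$ if ($x\vDash\varphi_k$ iff $y\vDash\varphi_k$) and $1$ otherwise; let $w:D\to\mathbb{R}_{>0}$ have $\sum_k w(\boldsymbol{\varphi}_k)<\infty$; and set $d_w=\sum_k w(\boldsymbol{\varphi}_k)d_k$. $\mathcal{D}_{\boldsymbol{X}}$ is the set of all such $d_w$. *)

theory Defs
  imports "HOL-Analysis.Analysis"
begin

datatype ('a, 'i) fm =
    Top
  | Atom 'a
  | Neg "('a, 'i) fm"
  | Conj "('a, 'i) fm" "('a, 'i) fm"
  | Box 'i "('a, 'i) fm"

definition Disj :: "('a,'i) fm \<Rightarrow> ('a,'i) fm \<Rightarrow> ('a,'i) fm" where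
  "Disj p q = Neg (Conj (Neg p) (Neg q))"

definition Imp :: "('a,'i) fm \<Rightarrow> ('a,'i) fm \<Rightarrow> ('a,'i) fm" where
  "Imp p q = Neg (Conj p (Neg q))"

definition Iff :: "('a,'i) fm \<Rightarrow> ('a,'i) fm \<Rightarrow> ('a,'i) fm" where
  "Iff p q = Conj (Imp p q) (Imp q p)"

text \<open>Propositional evaluation, treating boxed formulas as propositional letters.\<close>
fun peval :: "(('a,'i) fm \<Rightarrow> bool) \<Rightarrow> ('a,'i) fm \<Rightarrow> bool" where
  "peval v Top = True"
| "peval v (Atom p) = v (Atom p)"
| "peval v (Neg p) = (\<not> peval v p)"
| "peval v (Conj p q) = (peval v p \<and> peval v q)"
| "peval v (Box i p) = v (Box i p)"

definition tautology :: "('a,'i) fm \<Rightarrow> bool" where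
  "tautology p \<longleftrightarrow> (\<forall>v. peval v p)"

fun subst :: "('a \<Rightarrow> ('a,'i) fm) \<Rightarrow> ('a,'i) fm \<Rightarrow> ('a,'i) fm" where
  "subst s Top = Top"
| "subst s (Atom p) = s p"
| "subst s (Neg p) = Neg (subst s p)"
| "subst s (Conj p q) = Conj (subst s p) (subst s q)"
| "subst s (Box i p) = Box i (subst s p)"

definition normal_logic :: "('a,'i) fm set \<Rightarrow> bool" where
  "normal_logic L \<longleftrightarrow>
     (\<forall>p. tautology p \<longrightarrow> p \<in> L)
   \<and> (\<forall>i p q. Imp (Box i (Imp p q)) (Imp (Box i p) (Box i q)) \<in> L)
   \<and> (\<forall>p q. p \<in> L \<longrightarrow> Imp p q \<in> L \<longrightarrow> q \<in> L)
   \<and> (\<forall>i p. p \<in> L \<longrightarrow> Box i p \<in> L)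
   \<and> (\<forall>s p. p \<in> L \<longrightarrow> subst s p \<in> L)"

definition lequiv :: "('a,'i) fm set \<Rightarrow> ('a,'i) fm \<Rightarrow> ('a,'i) fm \<Rightarrow> bool" where
  "lequiv L p q \<longleftrightarrow> Iff p q \<in> L"

text \<open>Countable state sets are represented as subsets of nat.\<close>
record ('a, 'i) kmodel =
  W :: "nat set"
  R :: "'i \<Rightarrow> nat \<Rightarrow> nat \<Rightarrow> bool"
  V :: "nat \<Rightarrow> 'a set"

type_synonym ('a, 'i) pmodel = "('a, 'i) kmodel \<times> nat"

definition wf_pmodel :: "('a,'i) pmodel \<Rightarrow> bool" where
  "wf_pmodel x \<longleftrightarrow> snd x \<in> W (fst x)
     \<and> (\<forall>i u v. R (fst x) i u v \<longrightarrow> u \<in> W (fst x) \<and> v \<in> W (fst x))"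

fun sat :: "('a,'i) kmodel \<Rightarrow> nat \<Rightarrow> ('a,'i) fm \<Rightarrow> bool" where
  "sat M w Top = True"
| "sat M w (Atom p) = (p \<in> V M w)"
| "sat M w (Neg p) = (\<not> sat M w p)"
| "sat M w (Conj p q) = (sat M w p \<and> sat M w q)"
| "sat M w (Box i p) = (\<forall>v. R M i w v \<longrightarrow> sat M v p)"

definition psat :: "('a,'i) pmodel \<Rightarrow> ('a,'i) fm \<Rightarrow> bool" where
  "psat x p = sat (fst x) (snd x) p"

definition modal_equiv :: "('a,'i) pmodel \<Rightarrow> ('a,'i) pmodel \<Rightarrow> bool" where
  "modal_equiv x y \<longleftrightarrow> (\<forall>p. psat x p \<longleftrightarrow> psat y p)"

definition bisimulation ::
  "('a,'i) kmodel \<Rightarrow> ('a,'i) kmodel \<Rightarrow> (nat \<Rightarrow> nat \<Rightarrow> bool) \<Rightarrow> bool" where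
  "bisimulation M N Z \<longleftrightarrow> (\<forall>u v. Z u v \<longrightarrow>
       u \<in> W M \<and> v \<in> W N \<and> V M u = V N v
     \<and> (\<forall>i u'. R M i u u' \<longrightarrow> (\<exists>v'. R N i v v' \<and> Z u' v'))
     \<and> (\<forall>i v'. R N i v v' \<longrightarrow> (\<exists>u'. R M i u u' \<and> Z u' v')))"

definition bisimilar :: "('a,'i) pmodel \<Rightarrow> ('a,'i) pmodel \<Rightarrow> bool" where
  "bisimilar x y \<longleftrightarrow> (\<exists>Z. bisimulation (fst x) (fst y) Z \<and> Z (snd x) (snd y))"

fun nbisim :: "nat \<Rightarrow> ('a,'i) kmodel \<Rightarrow> nat \<Rightarrow> ('a,'i) kmodel \<Rightarrow> nat \<Rightarrow> bool" where
  "nbisim 0 M u N v = (V M u = V N v)"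
| "nbisim (Suc n) M u N v = (V M u = V N v
     \<and> (\<forall>i u'. R M i u u' \<longrightarrow> (\<exists>v'. R N i v v' \<and> nbisim n M u' N v'))
     \<and> (\<forall>i v'. R N i v v' \<longrightarrow> (\<exists>u'. R M i u u' \<and> nbisim n M u' N v')))"

definition nbisimilar :: "nat \<Rightarrow> ('a,'i) pmodel \<Rightarrow> ('a,'i) pmodel \<Rightarrow> bool" where
  "nbisimilar n x y = nbisim n (fst x) (snd x) (fst y) (snd y)"

definition mclass :: "('a,'i) pmodel set \<Rightarrow> ('a,'i) pmodel \<Rightarrow> ('a,'i) pmodel set" where
  "mclass X x = {y \<in> X. modal_equiv y x}"

definition modal_space :: "('a,'i) pmodel set \<Rightarrow> ('a,'i) pmodel set set" where
  "modal_space X = mclass X ` X"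

definition rep :: "('a,'i) pmodel set \<Rightarrow> ('a,'i) pmodel" where
  "rep A = (SOME x. x \<in> A)"

definition dB :: "('a,'i) pmodel set \<Rightarrow> ('a,'i) pmodel set \<Rightarrow> real" where
  "dB A B = (if \<forall>n. nbisimilar n (rep A) (rep B) then 0
             else (1/2) ^ (LEAST n. \<not> nbisimilar n (rep A) (rep B)))"

text \<open>The metric family. D is a set of formulas, one representative per
\<Lambda>-equivalence class (so D stands for a set of classes).\<close>
definition admissible_D ::
  "('a,'i) fm set \<Rightarrow> ('a,'i) pmodel set \<Rightarrow> ('a,'i) fm set \<Rightarrow> bool" where
  "admissible_D L X D \<longleftrightarrow>
     (\<forall>p\<in>D. \<forall>q\<in>D. lequiv L p q \<longrightarrow> p = q)
   \<and> (\<forall>q. \<exists>Dq. finite Dq \<and> Dq \<subseteq> D \<and>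
        (\<forall>x\<in>X. \<forall>y\<in>X. (\<forall>c\<in>Dq. psat x c \<longleftrightarrow> psat y c) \<longrightarrow> (psat x q \<longleftrightarrow> psat y q)))"

definition admissible_w :: "('a,'i) fm set \<Rightarrow> (('a,'i) fm \<Rightarrow> real) \<Rightarrow> bool" where
  "admissible_w D w \<longleftrightarrow> (\<forall>p\<in>D. w p > 0) \<and> w summable_on D"

definition dw :: "('a,'i) fm set \<Rightarrow> (('a,'i) fm \<Rightarrow> real)
                   \<Rightarrow> ('a,'i) pmodel set \<Rightarrow> ('a,'i) pmodel set \<Rightarrow> real" where
  "dw D w A B = (\<Sum>\<^sub>\<infinity>p\<in>D. w p * (if psat (rep A) p = psat (rep B) p then 0 else 1))"

definition metric_family ::
  "('a,'i) fm set \<Rightarrow> ('a,'i) pmodel set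
     \<Rightarrow> (('a,'i) pmodel set \<Rightarrow> ('a,'i) pmodel set \<Rightarrow> real) set" where
  "metric_family L X = {dw D w | D w. admissible_D L X D \<and> admissible_w D w}"

end

(* Formulas of modal depth at most n are invariant under n-bisimilarity, and with
   finitely many atoms and agents n-bisimilarity is in turn decided by finitely many
   formulas. Take one representative of every Lambda-equivalence class and
   weights 2^-k along an enumeration. Then d_w-closeness forces agreement on any
   prescribed finite set of formulas, hence n-bisimilarity; conversely
   n-bisimilarity forces agreement on the finitely many formulas of small index,
   and the remaining weights form an arbitrarily small tail. *)

theory Submission
  imports Defs "HOL-Library.Countable"
begin

instance fm :: (countable, countable) countable
  by countable_datatype

section \<open>Bounded bisimulation\<close>

primrec modal_depth :: "('a,'i) fm \<Rightarrow> nat" where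
  "modal_depth Top = 0"
| "modal_depth (Atom p) = 0"
| "modal_depth (Neg p) = modal_depth p"
| "modal_depth (Conj p q) = max (modal_depth p) (modal_depth q)"
| "modal_depth (Box i p) = Suc (modal_depth p)"

lemma nbisim_valuation: "nbisim n M u N v \<Longrightarrow> V M u = V N v"
  by (cases n) auto

lemma nbisim_refl: "nbisim n M u M u"
  by (induction n arbitrary: u) auto

lemma nbisim_sym: "nbisim n M u N v \<Longrightarrow> nbisim n N v M u"
proof (induction n arbitrary: u v)
  case (Suc n)
  then show ?case by (simp (no_asm_use)) (metis Suc.IH)
qed simp

lemma nbisim_trans: "nbisim n M u N v \<Longrightarrow> nbisim n N v K w \<Longrightarrow> nbisim n M u K w"
proof (induction n arbitrary: u v w)
  case (Suc n)
  have "\<exists>w'. R K i w w' \<and> nbisim n M u' K w'" if r: "R M i u u'" for i u'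
  proof -
    obtain v' where "R N i v v'" "nbisim n M u' N v'" using r Suc.prems(1) by simp blast
    moreover obtain w' where "R K i w w'" "nbisim n N v' K w'"
      using calculation(1) Suc.prems(2) by simp blast
    ultimately show ?thesis using Suc.IH by blast
  qed
  moreover have "\<exists>u'. R M i u u' \<and> nbisim n M u' K w'" if r: "R K i w w'" for i w'
  proof -
    obtain v' where "R N i v v'" "nbisim n N v' K w'" using r Suc.prems(2) by simp blast
    moreover obtain u' where "R M i u u'" "nbisim n M u' N v'"
      using calculation(1) Suc.prems(1) by simp blast
    ultimately show ?thesis using Suc.IH by blast
  qed
  ultimately show ?case using Suc.prems by simp
qed simp

lemma nbisim_Suc_imp: "nbisim (Suc n) M u N v \<Longrightarrow> nbisim n M u N v"
proof (induction n arbitrary: u v)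
  case (Suc n)
  then show ?case by (simp (no_asm_use)) (metis Suc.IH)
qed simp

lemma nbisim_le_imp: "m \<le> n \<Longrightarrow> nbisim n M u N v \<Longrightarrow> nbisim m M u N v"
  by (induction rule: dec_induct) (blast dest: nbisim_Suc_imp)+

lemma nbisim_sat_eq:
  "nbisim n M u N v \<Longrightarrow> modal_depth \<phi> \<le> n \<Longrightarrow> sat M u \<phi> = sat N v \<phi>"
proof (induction \<phi> arbitrary: n u v)
  case (Box i p)
  then obtain m where n: "n = Suc m" and "modal_depth p \<le> m" by (cases n) auto
  then have "sat M u' p = sat N v' p" if "nbisim m M u' N v'" for u' v'
    using that Box.IH by blast
  then show ?case using Box.prems(1) n by simp metis
qed (auto dest: nbisim_valuation)

section \<open>Characteristic formulas\<close>

definition Dia :: "'i \<Rightarrow> ('a,'i) fm \<Rightarrow> ('a,'i) fm" where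
  "Dia i p = Neg (Box i (Neg p))"

lemma sat_Dia [simp]: "sat M u (Dia i p) \<longleftrightarrow> (\<exists>v. R M i u v \<and> sat M v p)"
  by (simp add: Dia_def)

definition signature_fm :: "('a,'i) fm list \<Rightarrow> ('a,'i) fm set \<Rightarrow> ('a,'i) fm" where
  "signature_fm ps \<sigma> = foldr (\<lambda>p acc. Conj (if p \<in> \<sigma> then p else Neg p) acc) ps Top"

lemma sat_signature_fm:
  "sat M w (signature_fm ps \<sigma>) \<longleftrightarrow> (\<forall>p\<in>set ps. sat M w p \<longleftrightarrow> p \<in> \<sigma>)"
  unfolding signature_fm_def by (induction ps) auto

text \<open>With finitely many atoms and agents, agreement on the atoms and on the formulas
  \<open>\<diamond>\<^sub>i \<chi>\<close>, where \<open>\<chi>\<close> ranges over the finitely many signatures of a set determining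
  \<open>n\<close>-bisimilarity, determines \<open>(n+1)\<close>-bisimilarity.\<close>
lemma nbisim_determined_by_finite_set:
  "\<exists>S :: ('a::finite, 'i::finite) fm set. finite S \<and>
     (\<forall>M u N v. (\<forall>p\<in>S. sat M u p = sat N v p) \<longrightarrow> nbisim n M u N v)"
proof (induction n)
  case 0
  have "nbisim 0 M u N v" if "\<forall>p\<in>range Atom. sat M u p = sat N v (p :: ('a,'i) fm)" for M u N v
  proof -
    have "\<forall>a. a \<in> V M u \<longleftrightarrow> a \<in> V N v" using that by simp
    then show ?thesis by auto
  qed
  moreover have "finite (range (Atom :: 'a \<Rightarrow> ('a,'i) fm))" by simp
  ultimately show ?case by blast
next
  case (Suc n)
  then obtain S :: "('a,'i) fm set" where "finite S"
    and S: "\<And>M u N v. \<forall>p\<in>S. sat M u p = sat N v p \<Longrightarrow> nbisim n M u N v" by blast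
  then obtain ps where ps: "set ps = S" using finite_list by blast
  define S' where "S' = range Atom \<union> (\<lambda>(i, \<sigma>). Dia i (signature_fm ps \<sigma>)) ` (UNIV \<times> Pow S)"
  have "nbisim (Suc n) M u N v" if agree: "\<forall>p\<in>S'. sat M u p = sat N v p" for M u N v
  proof -
    have Dia_agree: "sat M u (Dia i (signature_fm ps \<sigma>)) = sat N v (Dia i (signature_fm ps \<sigma>))"
      if "\<sigma> \<subseteq> S" for i \<sigma>
    proof -
      have "Dia i (signature_fm ps \<sigma>) \<in> S'"
        unfolding S'_def using that by (auto intro!: image_eqI[of _ _ "(i, \<sigma>)"])
      then show ?thesis using agree by blast
    qed
    have "sat M u (Atom a) = sat N v (Atom a)" for a using agree unfolding S'_def by blast
    then have "V M u = V N v" by auto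
    moreover have "\<exists>v'. R N i v v' \<and> nbisim n M u' N v'" if "R M i u u'" for i u'
    proof -
      let ?\<sigma> = "{p\<in>S. sat M u' p}"
      have "sat M u (Dia i (signature_fm ps ?\<sigma>))" using that by (auto simp: sat_signature_fm ps)
      then obtain v' where step: "R N i v v'" and "sat N v' (signature_fm ps ?\<sigma>)"
        using Dia_agree[of ?\<sigma> i] by auto
      then have "\<forall>p\<in>S. sat M u' p = sat N v' p" by (auto simp: sat_signature_fm ps)
      then show ?thesis using S step by blast
    qed
    moreover have "\<exists>u'. R M i u u' \<and> nbisim n M u' N v'" if "R N i v v'" for i v'
    proof -
      let ?\<sigma> = "{p\<in>S. sat N v' p}"
      have "sat N v (Dia i (signature_fm ps ?\<sigma>))" using that by (auto simp: sat_signature_fm ps)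
      then obtain u' where step: "R M i u u'" and "sat M u' (signature_fm ps ?\<sigma>)"
        using Dia_agree[of ?\<sigma> i] by auto
      then have "\<forall>p\<in>S. sat M u' p = sat N v' p" by (auto simp: sat_signature_fm ps)
      then show ?thesis using S step by blast
    qed
    ultimately show ?thesis by simp
  qed
  moreover have "finite S'" using \<open>finite S\<close> unfolding S'_def by simp
  ultimately show ?case by blast
qed

lemma rep_in_modal_space:
  assumes "A \<in> modal_space X"
  shows "rep A \<in> X" and "A = mclass X (rep A)"
proof -
  obtain x where x: "x \<in> X" "A = mclass X x" using assms unfolding modal_space_def by blast
  then have "x \<in> A" by (simp add: mclass_def modal_equiv_def)
  then have "rep A \<in> A" unfolding rep_def by (rule someI)
  then have "rep A \<in> X" and "modal_equiv (rep A) x" using x by (auto simp: mclass_def)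
  then show "rep A \<in> X" and "A = mclass X (rep A)" using x by (auto simp: mclass_def modal_equiv_def)
qed

lemma modal_space_eqI:
  assumes "A \<in> modal_space X" "B \<in> modal_space X" "\<And>p. psat (rep A) p = psat (rep B) p"
  shows "A = B"
proof -
  have "mclass X (rep A) = mclass X (rep B)"
    using assms(3) by (auto simp: mclass_def modal_equiv_def)
  then show ?thesis using rep_in_modal_space assms(1,2) by metis
qed

lemma dB_nonneg: "0 \<le> dB A B"
  by (simp add: dB_def)

lemma dB_eq_0_iff: "dB A B = 0 \<longleftrightarrow> (\<forall>n. nbisimilar n (rep A) (rep B))"
  by (simp add: dB_def)

lemma dB_commute: "dB A B = dB B A"
proof -
  have "nbisimilar n (rep A) (rep B) = nbisimilar n (rep B) (rep A)" for n
    unfolding nbisimilar_def using nbisim_sym by blast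
  then show ?thesis unfolding dB_def by presburger
qed

lemma dB_less_power_iff: "dB A B < (1/2)^n \<longleftrightarrow> nbisimilar n (rep A) (rep B)"
proof (cases "\<forall>m. nbisimilar m (rep A) (rep B)")
  case True
  then show ?thesis by (simp add: dB_def)
next
  case False
  define m where "m = (LEAST m. \<not> nbisimilar m (rep A) (rep B))"
  have "\<not> nbisimilar m (rep A) (rep B)"
    using False unfolding m_def by (metis (mono_tags, lifting) LeastI)
  have "nbisimilar n (rep A) (rep B) \<longleftrightarrow> n < m"
  proof
    assume "nbisimilar n (rep A) (rep B)"
    show "n < m"
    proof (rule ccontr)
      assume "\<not> n < m"
      then show False
        using nbisim_le_imp[of m n] \<open>nbisimilar n (rep A) (rep B)\<close>
          \<open>\<not> nbisimilar m (rep A) (rep B)\<close>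
        unfolding nbisimilar_def not_less by blast
    qed
  next
    assume "n < m"
    then show "nbisimilar n (rep A) (rep B)" unfolding m_def using not_less_Least by blast
  qed
  moreover have "dB A B = (1/2)^m" using False by (simp add: dB_def m_def)
  ultimately show ?thesis by simp
qed

lemma dB_triangle: "dB A C \<le> dB A B + dB B C"
proof (cases "\<forall>n. nbisimilar n (rep A) (rep C)")
  case True
  then show ?thesis by (simp add: dB_def dB_nonneg add_nonneg_nonneg)
next
  case False
  then obtain m where m: "dB A C = (1/2)^m" by (simp add: dB_def)
  then have "\<not> nbisimilar m (rep A) (rep C)" using dB_less_power_iff by (metis less_irrefl)
  then have "\<not> nbisimilar m (rep A) (rep B) \<or> \<not> nbisimilar m (rep B) (rep C)"
    unfolding nbisimilar_def using nbisim_trans by blast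
  then have "dB A C \<le> dB A B \<or> dB A C \<le> dB B C"
    unfolding m by (simp add: dB_less_power_iff[symmetric] not_less[symmetric])
  then show ?thesis using dB_nonneg[of A B] dB_nonneg[of B C] by linarith
qed

lemma Metric_space_dB: "Metric_space (modal_space X) dB"
proof
  fix A B assume "A \<in> modal_space X" "B \<in> modal_space X"
  moreover have "psat (rep A) p = psat (rep B) p" if "dB A B = 0" for p
    using that nbisim_sat_eq[of "modal_depth p"]
    unfolding dB_eq_0_iff nbisimilar_def psat_def by blast
  moreover have "dB A A = 0"
    unfolding dB_eq_0_iff nbisimilar_def using nbisim_refl by blast
  ultimately show "dB A B = 0 \<longleftrightarrow> A = B"
    using modal_space_eqI by blast
qed (use dB_nonneg dB_commute dB_triangle in auto)

section \<open>Weighted metrics\<close>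

lemma summable_on_weighted_indicator:
  assumes "admissible_w D w"
  shows "(\<lambda>p. w p * (if P p then 0 else 1)) summable_on D"
  by (rule summable_on_comparison_test[of w])
     (use assms in \<open>auto simp: admissible_w_def less_imp_le\<close>)

lemma dw_nonneg: "admissible_w D w \<Longrightarrow> 0 \<le> dw D w A B"
  unfolding dw_def admissible_w_def by (intro infsum_nonneg) (auto simp: less_imp_le)

lemma dw_commute: "dw D w A B = dw D w B A"
  unfolding dw_def by (intro infsum_cong) auto

lemma dw_self: "dw D w A A = 0"
  unfolding dw_def by simp

lemma dw_triangle:
  assumes "admissible_w D w"
  shows "dw D w A C \<le> dw D w A B + dw D w B C"
proof -
  note summable = summable_on_weighted_indicator[OF assms]
  have "dw D w A C \<le> (\<Sum>\<^sub>\<infinity>p\<in>D. w p * (if psat (rep A) p = psat (rep B) p then 0 else 1)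
                       + w p * (if psat (rep B) p = psat (rep C) p then 0 else 1))"
    unfolding dw_def using assms unfolding admissible_w_def
    by (intro infsum_mono summable summable_on_add) (auto simp: less_imp_le)
  also have "\<dots> = dw D w A B + dw D w B C"
    unfolding dw_def by (intro infsum_add summable)
  finally show ?thesis .
qed

lemma weight_le_dw:
  assumes "admissible_w D w" "p \<in> D" "psat (rep A) p \<noteq> psat (rep B) p"
  shows "w p \<le> dw D w A B"
proof -
  have "(\<Sum>q\<in>{p}. w q * (if psat (rep A) q = psat (rep B) q then 0 else 1)) \<le> dw D w A B"
    unfolding dw_def using assms unfolding admissible_w_def
    by (intro finite_sum_le_infsum summable_on_weighted_indicator[OF assms(1)])
       (auto simp: less_imp_le)
  then show ?thesis using assms(3) by simp
qed

lemma Metric_space_dw: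
  assumes D: "admissible_D L X D" and w: "admissible_w D w"
  shows "Metric_space (modal_space X) (dw D w)"
proof
  fix A B assume A: "A \<in> modal_space X" and B: "B \<in> modal_space X"
  have "A = B" if "dw D w A B = 0"
  proof (rule modal_space_eqI[OF A B])
    fix q
    have "psat (rep A) p = psat (rep B) p" if "p \<in> D" for p
      using weight_le_dw[OF w that] \<open>dw D w A B = 0\<close> w that
      unfolding admissible_w_def by fastforce
    moreover obtain Dq where "Dq \<subseteq> D"
      and "\<forall>x\<in>X. \<forall>y\<in>X. (\<forall>p\<in>Dq. psat x p \<longleftrightarrow> psat y p) \<longrightarrow> (psat x q \<longleftrightarrow> psat y q)"
      using D unfolding admissible_D_def by blast
    ultimately show "psat (rep A) q = psat (rep B) q"
      using rep_in_modal_space(1)[OF A] rep_in_modal_space(1)[OF B] by blast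
  qed
  then show "dw D w A B = 0 \<longleftrightarrow> A = B" using dw_self by blast
qed (use dw_nonneg[OF w] dw_commute dw_triangle[OF w] in auto)

lemma nbisimilar_if_dw_less:
  fixes D :: "('a::finite, 'i::finite) fm set"
  assumes D: "admissible_D L X D" and w: "admissible_w D w"
  shows "\<exists>s>0. \<forall>A\<in>modal_space X. \<forall>B\<in>modal_space X.
           dw D w A B < s \<longrightarrow> nbisimilar n (rep A) (rep B)"
proof -
  obtain S :: "('a,'i) fm set" where "finite S"
    and S: "\<And>M u N v. \<forall>p\<in>S. sat M u p = sat N v p \<Longrightarrow> nbisim n M u N v"
    using nbisim_determined_by_finite_set by blast
  obtain Dq where Dq: "\<And>q. finite (Dq q) \<and> Dq q \<subseteq> D \<and>
      (\<forall>x\<in>X. \<forall>y\<in>X. (\<forall>p\<in>Dq q. psat x p \<longleftrightarrow> psat y p) \<longrightarrow> (psat x q \<longleftrightarrow> psat y q))"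
    using D unfolding admissible_D_def by metis
  define F where "F = (\<Union>q\<in>S. Dq q)"
  have "finite F" "F \<subseteq> D" using \<open>finite S\<close> Dq unfolding F_def by auto
  define s where "s = Min (insert 1 (w ` F))"
  have "s > 0"
    using \<open>finite F\<close> \<open>F \<subseteq> D\<close> w unfolding s_def admissible_w_def by auto
  moreover have "nbisimilar n (rep A) (rep B)"
    if A: "A \<in> modal_space X" and B: "B \<in> modal_space X" and less: "dw D w A B < s" for A B
  proof -
    have "psat (rep A) p = psat (rep B) p" if "p \<in> F" for p
    proof -
      have "s \<le> w p" using \<open>finite F\<close> that unfolding s_def by simp
      then show ?thesis using weight_le_dw[OF w, of p A B] less that \<open>F \<subseteq> D\<close> by fastforce
    qed
    then have "psat (rep A) q = psat (rep B) q" if "q \<in> S" for q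
      using Dq[of q] that rep_in_modal_space(1)[OF A] rep_in_modal_space(1)[OF B]
      unfolding F_def by blast
    then show ?thesis using S unfolding nbisimilar_def psat_def by blast
  qed
  ultimately show ?thesis by blast
qed

definition geom_weight :: "'b::countable \<Rightarrow> real" where
  "geom_weight p = (1/2) ^ to_nat p"

lemma geom_weight_pos: "geom_weight p > 0"
  by (simp add: geom_weight_def)

lemma infsum_geom_weight_eq: "infsum geom_weight A = (\<Sum>\<^sub>\<infinity>k\<in>to_nat ` A. (1/2::real) ^ k)"
  by (subst infsum_reindex) (auto simp: geom_weight_def[abs_def] o_def inj_on_def)

lemma summable_on_power_half: "(\<lambda>k::nat. (1/2::real) ^ k) summable_on A"
  by (rule summable_on_subset_banach[of _ UNIV])
     (auto intro: summable_nonneg_imp_summable_on summable_geometric)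

lemma summable_on_geom_weight: "geom_weight summable_on A"
proof -
  have "((\<lambda>k::nat. (1/2::real) ^ k) \<circ> to_nat) summable_on A"
    using summable_on_power_half[of "to_nat ` A"]
    by (subst (asm) summable_on_reindex) (auto simp: inj_on_def)
  then show ?thesis by (simp add: geom_weight_def[abs_def] o_def)
qed

lemma admissible_w_geom_weight: "admissible_w D geom_weight"
  by (simp add: admissible_w_def geom_weight_pos summable_on_geom_weight)

lemma has_sum_power_half_tail: "((\<lambda>k::nat. (1/2::real) ^ k) has_sum (2 * (1/2)^N)) {N..}"
proof -
  have "(\<lambda>j. (1/2::real)^N * (1/2)^j) sums ((1/2)^N * (1 / (1 - 1/2)))"
    by (intro sums_mult geometric_sums) simp
  then have "((\<lambda>j. (1/2::real)^N * (1/2)^j) has_sum (2 * (1/2)^N)) UNIV"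
    by (intro sums_nonneg_imp_has_sum) (simp_all add: mult.commute)
  moreover have "{N..} = (\<lambda>j. j + N) ` UNIV"
    by (auto simp: image_iff) (metis le_add_diff_inverse2)
  ultimately show ?thesis
    by (simp add: has_sum_reindex o_def power_add mult.commute)
qed

lemma infsum_geom_weight_tail:
  assumes "\<forall>p\<in>A. N \<le> to_nat p"
  shows "infsum geom_weight A \<le> 2 * (1/2)^N"
proof -
  have "infsum geom_weight A \<le> (\<Sum>\<^sub>\<infinity>k\<in>{N..}. (1/2::real) ^ k)"
    unfolding infsum_geom_weight_eq
    by (rule infsum_mono2) (use assms summable_on_power_half in auto)
  also have "\<dots> = 2 * (1/2)^N" using has_sum_power_half_tail by (rule infsumI)
  finally show ?thesis .
qed

lemma dw_geom_weight_le:
  assumes "\<forall>p\<in>D. to_nat p < N \<longrightarrow> psat (rep A) p = psat (rep B) p"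
  shows "dw D geom_weight A B \<le> 2 * (1/2)^N"
proof -
  have "dw D geom_weight A B \<le> infsum geom_weight {p\<in>D. N \<le> to_nat p}"
    unfolding dw_def
    by (rule infsum_mono_neutral
        [OF summable_on_weighted_indicator[OF admissible_w_geom_weight] summable_on_geom_weight])
       (use assms in \<open>auto simp: geom_weight_pos less_imp_le\<close>)
  also have "\<dots> \<le> 2 * (1/2)^N" by (rule infsum_geom_weight_tail) simp
  finally show ?thesis .
qed

lemma dw_geom_weight_less_if_nbisimilar:
  assumes "r > 0"
  shows "\<exists>n. \<forall>A B. nbisimilar n (rep A) (rep B) \<longrightarrow> dw D geom_weight A B < r"
proof -
  obtain N where N: "(1/2::real)^N < r/2"
    using real_arch_pow_inv[of "r/2" "1/2::real"] assms by auto
  define F where "F = {p\<in>D. to_nat p < N}"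
  have "finite F"
    unfolding F_def by (rule finite_subset[OF _ finite_vimageI[OF finite_lessThan inj_to_nat]]) auto
  define n where "n = Max (modal_depth ` F)"
  have "dw D geom_weight A B < r" if "nbisimilar n (rep A) (rep B)" for A B
  proof -
    have "psat (rep A) p = psat (rep B) p" if "p \<in> F" for p
    proof -
      have "modal_depth p \<le> n" unfolding n_def using \<open>finite F\<close> that by simp
      then show ?thesis using nbisim_sat_eq \<open>nbisimilar n (rep A) (rep B)\<close>
        unfolding nbisimilar_def psat_def by blast
    qed
    then have "dw D geom_weight A B \<le> 2 * (1/2)^N" by (intro dw_geom_weight_le) (simp add: F_def)
    then show ?thesis using N by simp
  qed
  then show ?thesis by blast
qed

section \<open>Representatives of \<open>\<Lambda>\<close>-equivalence classes\<close>

lemma normal_logic_tautology: "normal_logic L \<Longrightarrow> tautology p \<Longrightarrow> p \<in> L"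
  by (simp add: normal_logic_def)

lemma normal_logic_mp: "normal_logic L \<Longrightarrow> p \<in> L \<Longrightarrow> Imp p q \<in> L \<Longrightarrow> q \<in> L"
  unfolding normal_logic_def by blast

lemma lequiv_refl: "normal_logic L \<Longrightarrow> lequiv L p p"
  unfolding lequiv_def
  by (rule normal_logic_tautology) (auto simp: tautology_def Iff_def Imp_def)

lemma lequiv_sym: "normal_logic L \<Longrightarrow> lequiv L p q \<Longrightarrow> lequiv L q p"
  unfolding lequiv_def
  by (rule normal_logic_mp, assumption+, rule normal_logic_tautology)
     (auto simp: tautology_def Iff_def Imp_def)

lemma lequiv_trans: "normal_logic L \<Longrightarrow> lequiv L p q \<Longrightarrow> lequiv L q r \<Longrightarrow> lequiv L p r"
  unfolding lequiv_def
  by (rule normal_logic_mp, assumption+, rule normal_logic_mp, assumption+,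
      rule normal_logic_tautology) (auto simp: tautology_def Iff_def Imp_def)

definition lrep :: "('a,'i) fm set \<Rightarrow> ('a,'i) fm \<Rightarrow> ('a,'i) fm" where
  "lrep L q = (SOME p. lequiv L p q)"

lemma lequiv_lrep: "normal_logic L \<Longrightarrow> lequiv L (lrep L q) q"
  unfolding lrep_def by (rule someI) (rule lequiv_refl)

lemma lrep_eq: "normal_logic L \<Longrightarrow> lequiv L p q \<Longrightarrow> lrep L p = lrep L q"
  unfolding lrep_def by (metis lequiv_sym lequiv_trans)

lemma psat_lrep:
  assumes "normal_logic L" "\<forall>p\<in>L. psat x p"
  shows "psat x (lrep L q) = psat x q"
proof -
  have "psat x (Iff (lrep L q) q)"
    using assms lequiv_lrep[OF assms(1), of q] unfolding lequiv_def by blast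
  then show ?thesis by (auto simp: psat_def Iff_def Imp_def)
qed

lemma admissible_D_range_lrep:
  assumes L: "normal_logic L" and X: "\<forall>x\<in>X. \<forall>p\<in>L. psat x p"
  shows "admissible_D L X (range (lrep L))"
  unfolding admissible_D_def
proof (intro conjI ballI allI impI)
  fix p q assume "p \<in> range (lrep L)" "q \<in> range (lrep L)" "lequiv L p q"
  then show "p = q"
    using lequiv_lrep[OF L] lequiv_sym[OF L] lequiv_trans[OF L] lrep_eq[OF L] by (metis imageE)
next
  fix q
  show "\<exists>Dq. finite Dq \<and> Dq \<subseteq> range (lrep L) \<and>
          (\<forall>x\<in>X. \<forall>y\<in>X. (\<forall>c\<in>Dq. psat x c \<longleftrightarrow> psat y c) \<longrightarrow> (psat x q \<longleftrightarrow> psat y q))"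
    using psat_lrep[OF L] X by (intro exI[of _ "{lrep L q}"]) auto
qed

lemma openin_mtopology_if_balls_nested:
  assumes "Metric_space M d1" "Metric_space M d2"
    and "\<And>x r. x \<in> M \<Longrightarrow> r > 0 \<Longrightarrow> \<exists>s>0. \<forall>y\<in>M. d2 x y < s \<longrightarrow> d1 x y < r"
    and "openin (Metric_space.mtopology M d1) U"
  shows "openin (Metric_space.mtopology M d2) U"
proof -
  interpret M1: Metric_space M d1 by fact
  interpret M2: Metric_space M d2 by fact
  have U: "U \<subseteq> M" "\<And>x. x \<in> U \<Longrightarrow> \<exists>r>0. M1.mball x r \<subseteq> U"
    using assms(4) unfolding M1.openin_mtopology by auto
  have "\<exists>s>0. M2.mball x s \<subseteq> U" if "x \<in> U" for x
  proof -
    obtain r where "r > 0" "M1.mball x r \<subseteq> U" using U(2) \<open>x \<in> U\<close> by blast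
    moreover obtain s where "s > 0" "\<forall>y\<in>M. d2 x y < s \<longrightarrow> d1 x y < r"
      using assms(3) \<open>r > 0\<close> \<open>x \<in> U\<close> U(1) by blast
    ultimately show ?thesis by (auto simp: M1.mball_def M2.mball_def)
  qed
  then show ?thesis unfolding M2.openin_mtopology using U(1) by blast
qed

lemma mtopology_eqI:
  assumes "Metric_space M d1" "Metric_space M d2"
    and "\<And>x r. x \<in> M \<Longrightarrow> r > 0 \<Longrightarrow> \<exists>s>0. \<forall>y\<in>M. d2 x y < s \<longrightarrow> d1 x y < r"
    and "\<And>x r. x \<in> M \<Longrightarrow> r > 0 \<Longrightarrow> \<exists>s>0. \<forall>y\<in>M. d1 x y < s \<longrightarrow> d2 x y < r"
  shows "Metric_space.mtopology M d1 = Metric_space.mtopology M d2"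
  unfolding topology_eq
  using openin_mtopology_if_balls_nested[OF assms(1,2,3)]
    openin_mtopology_if_balls_nested[OF assms(2,1,4)] by blast

theorem proposition5:
  fixes L :: "('a::finite, 'i::finite) fm set"
    and X :: "('a, 'i) pmodel set"
  assumes "normal_logic L"
    and "\<forall>x\<in>X. wf_pmodel x"
    and "\<forall>x\<in>X. \<forall>p\<in>L. psat x p"
    and "\<forall>x\<in>X. \<forall>y\<in>X. modal_equiv x y \<longleftrightarrow> bisimilar x y"
  shows "\<exists>d\<in>metric_family L X.
           Metric_space (modal_space X) d
         \<and> Metric_space.mtopology (modal_space X) d
             = Metric_space.mtopology (modal_space X) dB"
proof -
  define D where "D = range (lrep L)"
  have D: "admissible_D L X D" unfolding D_def using assms(1,3) by (rule admissible_D_range_lrep)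
  note w = admissible_w_geom_weight[of D]
  have "dw D geom_weight \<in> metric_family L X" unfolding metric_family_def using D w by blast
  moreover have dw: "Metric_space (modal_space X) (dw D geom_weight)"
    using D w by (rule Metric_space_dw)
  moreover have "Metric_space.mtopology (modal_space X) (dw D geom_weight)
                   = Metric_space.mtopology (modal_space X) dB"
  proof (rule mtopology_eqI[OF dw Metric_space_dB])
    fix A and r :: real assume "r > 0"
    then obtain n where "\<forall>A B. nbisimilar n (rep A) (rep B) \<longrightarrow> dw D geom_weight A B < r"
      using dw_geom_weight_less_if_nbisimilar by blast
    then show "\<exists>s>0. \<forall>B\<in>modal_space X. dB A B < s \<longrightarrow> dw D geom_weight A B < r"
      by (intro exI[of _ "(1/2)^n"]) (simp add: dB_less_power_iff)
  next
    fix A and r :: real assume "A \<in> modal_space X" "r > 0"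
    obtain n where n: "(1/2::real)^n < r"
      using real_arch_pow_inv[of r "1/2::real"] \<open>r > 0\<close> by auto
    obtain s where "s > 0"
      and "\<forall>B\<in>modal_space X. dw D geom_weight A B < s \<longrightarrow> nbisimilar n (rep A) (rep B)"
      using nbisimilar_if_dw_less[OF D w, of n] \<open>A \<in> modal_space X\<close> by blast
    then show "\<exists>s>0. \<forall>B\<in>modal_space X. dw D geom_weight A B < s \<longrightarrow> dB A B < r"
      using n dB_less_power_iff by (meson less_trans)
  qed
  ultimately show ?thesis by blast
qed

end
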